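(* If $S$ is a MANS-semigroup and $\mathrm{e}(S)=3$, then there exist $m,a,b,t\in\mathbb{N}$ such that $m\geq 3$, $a\geq 1$, $t\in\{2,\ldots,m-1\}$, $(t-1)(am+1)<bm+t<t(am+1)$, and $(\mathrm{m}(S),\mathrm{r}(S),\mathrm{M}(S))=(m,\ am+1,\ bm+t)$.
   Context: $\mathbb{N}=\{0,1,2,\ldots\}$. A numerical semigroup is a subset $S\subseteq\mathbb{N}$ closed under addition, containing $0$, with $\mathbb{N}\setminus S$ finite. It has a unique finite minimal system of generators $\mathrm{msg}(S)=\{n_1<\cdots<n_e\}$; $\mathrm{e}(S)=e$, $\mathrm{m}(S)=n_1$ (multiplicity), $\mathrm{r}(S)=n_2$ (ratio), $\mathrm{M}(S)=n_e$. $S$ is a MANS-semigroup if $w(1)<w(2)<\cdots<w(\mathrm{m}(S)-1)$, where $w(i)$ is the least element of $S$ congruent to $i$ modulo $\mathrm{m}(S)$. *)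

theory Defs
  imports Main
begin

definition numerical_semigroup :: "nat set \<Rightarrow> bool" where
  "numerical_semigroup S \<longleftrightarrow> 0 \<in> S \<and> (\<forall>x\<in>S. \<forall>y\<in>S. x + y \<in> S) \<and> finite (UNIV - S)"

text \<open>Minimal system of generators: the nonzero elements of S that are not a sum of two
  nonzero elements of S (standard characterisation of msg(S) for numerical semigroups).\<close>
definition msg :: "nat set \<Rightarrow> nat set" where
  "msg S = {x \<in> S. x \<noteq> 0 \<and> \<not> (\<exists>y\<in>S. \<exists>z\<in>S. y \<noteq> 0 \<and> z \<noteq> 0 \<and> x = y + z)}"

definition embdim :: "nat set \<Rightarrow> nat" where
  "embdim S = card (msg S)"

definition multiplicity :: "nat set \<Rightarrow> nat" where
  "multiplicity S = Min (msg S)"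

definition ratio :: "nat set \<Rightarrow> nat" where
  "ratio S = Min (msg S - {multiplicity S})"

definition maxgen :: "nat set \<Rightarrow> nat" where
  "maxgen S = Max (msg S)"

definition apery_w :: "nat set \<Rightarrow> nat \<Rightarrow> nat" where
  "apery_w S i = (LEAST s. s \<in> S \<and> s mod multiplicity S = i mod multiplicity S)"

definition MANS :: "nat set \<Rightarrow> bool" where
  "MANS S \<longleftrightarrow> numerical_semigroup S \<and>
     (\<forall>i j. 1 \<le> i \<and> i < j \<and> j \<le> multiplicity S - 1 \<longrightarrow> apery_w S i < apery_w S j)"

end

theory Submission
  imports Defs
begin

(* Write msg S = {m < r < M}.  Every element of S is a combination x m + y r + z M, so every
   element of S not divisible by m is at least r.  Hence w(1) \<ge> r \<ge> w(r mod m), and the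
   monotonicity of w forces r mod m = 1, i.e. r = a m + 1.  Put t = M mod m.  If M \<ge> t r, then
   M - t r is a multiple k m, so M = r + ((t - 1) r + k m) would not be a minimal generator;
   hence M < t r, which also rules out t = 1.  On the other hand an element s < M of S is a
   combination x m + y r with y \<equiv> s (mod m), so s \<ge> (s mod m) r; applied to
   w(t - 1) < w(t) \<le> M this gives (t - 1) r < M. *)

lemma card_3_sorted:
  fixes A :: "'a::linorder set"
  assumes "card A = 3"
  shows "\<exists>a b c. a < b \<and> b < c \<and> A = {a, b, c}"
proof -
  obtain x y z where A: "A = {x, y, z}" and "x \<noteq> y" "y \<noteq> z" "x \<noteq> z"
    using assms by (auto simp: card_3_iff)
  then consider "x < y" "y < z" | "x < z" "z < y" | "y < x" "x < z" | "y < z" "z < x"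
    | "z < x" "x < y" | "z < y" "y < x"
    by (metis linorder_neqE)
  then show ?thesis
    unfolding A by cases (blast, (metis insert_commute)+)
qed

lemma msg_generates:
  assumes "0 \<in> P" and "msg S \<subseteq> P" and add_closed: "\<And>x y. x \<in> P \<Longrightarrow> y \<in> P \<Longrightarrow> x + y \<in> P"
  shows "S \<subseteq> P"
proof
  fix s assume "s \<in> S"
  then show "s \<in> P"
  proof (induction s rule: less_induct)
    case (less s)
    show ?case
    proof (cases "s = 0 \<or> s \<in> msg S")
      case True
      then show ?thesis using assms by blast
    next
      case False
      then obtain u v where "u \<in> S" "v \<in> S" "u \<noteq> 0" "v \<noteq> 0" "s = u + v"
        using less.prems unfolding msg_def by auto
      then show ?thesis using less.IH add_closed by simp
    qed
  qed
qed

lemma numerical_semigroup_add: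
  "numerical_semigroup S \<Longrightarrow> x \<in> S \<Longrightarrow> y \<in> S \<Longrightarrow> x + y \<in> S"
  unfolding numerical_semigroup_def by blast

lemma numerical_semigroup_mult:
  assumes "numerical_semigroup S" and "x \<in> S"
  shows "k * x \<in> S"
proof (induction k)
  case 0
  then show ?case using assms(1) unfolding numerical_semigroup_def by simp
next
  case (Suc k)
  then show ?case using assms numerical_semigroup_add by simp
qed

lemma numerical_semigroup_eventually_mem:
  assumes "numerical_semigroup S"
  obtains N where "\<And>n. N \<le> n \<Longrightarrow> n \<in> S"
proof -
  have "finite (UNIV - S)" using assms unfolding numerical_semigroup_def by blast
  then obtain N where "\<forall>n \<in> UNIV - S. n < N"
    using finite_nat_set_iff_bounded by blast
  then show ?thesis using that by (metis DiffI UNIV_I not_le)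
qed

lemma msg_not_proper_multiple:
  assumes "numerical_semigroup S" and "g \<in> msg S" and "h \<in> S" and "g = k * h"
  shows "k = 1"
proof (rule ccontr)
  assume "k \<noteq> 1"
  moreover have "k \<noteq> 0" "h \<noteq> 0" using assms(2,4) unfolding msg_def by auto
  ultimately have "g = h + (k - 1) * h" and "(k - 1) * h \<noteq> 0"
    using assms(4) by (auto simp: mult_eq_if)
  moreover have "(k - 1) * h \<in> S" using assms(1,3) by (rule numerical_semigroup_mult)
  ultimately show False using assms(2,3) \<open>h \<noteq> 0\<close> unfolding msg_def by blast
qed

lemma apery_w_mem_mod:
  assumes "numerical_semigroup S" and "0 < multiplicity S"
  shows "apery_w S i \<in> S \<and> apery_w S i mod multiplicity S = i mod multiplicity S"
proof -
  let ?m = "multiplicity S"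
  obtain N where N: "\<And>n. N \<le> n \<Longrightarrow> n \<in> S"
    using numerical_semigroup_eventually_mem assms(1) by blast
  have "N \<le> N * ?m + i" using assms(2) by (simp add: trans_le_add1)
  then have "N * ?m + i \<in> S \<and> (N * ?m + i) mod ?m = i mod ?m" using N by simp
  then show ?thesis unfolding apery_w_def by (rule LeastI)
qed

lemma apery_w_le:
  "s \<in> S \<Longrightarrow> s mod multiplicity S = i mod multiplicity S \<Longrightarrow> apery_w S i \<le> s"
  unfolding apery_w_def by (rule Least_le) simp

locale three_generated =
  fixes S :: "nat set" and m r M :: nat
  assumes numerical_semigroup: "numerical_semigroup S"
    and msg_eq: "msg S = {m, r, M}"
    and m_less_r: "m < r" and r_less_M: "r < M"
begin

lemma generators_mem: "m \<in> S" "r \<in> S" "M \<in> S"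
  using msg_eq unfolding msg_def by auto

lemma M_not_sum: "u \<in> S \<Longrightarrow> v \<in> S \<Longrightarrow> u \<noteq> 0 \<Longrightarrow> v \<noteq> 0 \<Longrightarrow> M \<noteq> u + v"
  using msg_eq unfolding msg_def by blast

lemma m_pos: "0 < m"
  using msg_eq unfolding msg_def by auto

lemma multiplicity_eq: "multiplicity S = m"
  unfolding multiplicity_def msg_eq using m_less_r r_less_M by simp

lemma ratio_eq: "ratio S = r"
  unfolding ratio_def multiplicity_eq msg_eq using m_less_r r_less_M by simp

lemma maxgen_eq: "maxgen S = M"
  unfolding maxgen_def msg_eq using m_less_r r_less_M by simp

lemma combination_mem: "x * m + y * r + z * M \<in> S"
  by (intro numerical_semigroup_add[OF numerical_semigroup]
      numerical_semigroup_mult[OF numerical_semigroup] generators_mem)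

lemma mem_imp_combination:
  assumes "s \<in> S"
  obtains x y z where "s = x * m + y * r + z * M"
proof -
  let ?C = "{x * m + y * r + z * M | x y z. True}"
  have "S \<subseteq> ?C"
  proof (rule msg_generates)
    show "0 \<in> ?C" by force
    have "m = 1 * m + 0 * r + 0 * M" "r = 0 * m + 1 * r + 0 * M" "M = 0 * m + 0 * r + 1 * M"
      by simp_all
    then show "msg S \<subseteq> ?C" unfolding msg_eq by blast
  next
    fix u v assume "u \<in> ?C" "v \<in> ?C"
    then obtain x y z x' y' z' where "u = x * m + y * r + z * M" "v = x' * m + y' * r + z' * M"
      by blast
    then have "u + v = (x + x') * m + (y + y') * r + (z + z') * M"
      by (simp add: algebra_simps)
    then show "u + v \<in> ?C" by blast
  qed
  then show ?thesis using assms that by blast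
qed

lemma msg_mod_m_ne_0:
  assumes "g \<in> msg S" and "g \<noteq> m"
  shows "g mod m \<noteq> 0"
proof
  assume "g mod m = 0"
  then have g: "g = (g div m) * m" using div_mult_mod_eq[of g m] by simp
  then have "g div m = 1"
    by (rule msg_not_proper_multiple[OF numerical_semigroup assms(1) generators_mem(1)])
  then show False using g assms(2) by simp
qed

lemma r_mod_m_ne_0: "r mod m \<noteq> 0"
  using msg_mod_m_ne_0[of r] msg_eq m_less_r by simp

lemma M_mod_m_ne_0: "M mod m \<noteq> 0"
  using msg_mod_m_ne_0[of M] msg_eq m_less_r r_less_M by simp

lemma r_le_if_mod_ne_0:
  assumes "s \<in> S" and "s mod m \<noteq> 0"
  shows "r \<le> s"
proof -
  obtain x y z where s: "s = x * m + y * r + z * M"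
    using mem_imp_combination assms(1) by blast
  then have "y \<noteq> 0 \<or> z \<noteq> 0" using assms(2) by (cases y; cases z) auto
  then show ?thesis
  proof
    assume "y \<noteq> 0"
    then have "r \<le> y * r" by simp
    then show ?thesis using s by linarith
  next
    assume "z \<noteq> 0"
    then have "M \<le> z * M" by simp
    then show ?thesis using s r_less_M by linarith
  qed
qed

end

locale MANS_three_generated = three_generated +
  assumes MANS: "MANS S"
begin

lemma apery_w_strict_mono: "1 \<le> i \<Longrightarrow> i < j \<Longrightarrow> j < m \<Longrightarrow> apery_w S i < apery_w S j"
  using MANS multiplicity_eq unfolding MANS_def by auto

lemma apery_w_mem_mod_m: "apery_w S i \<in> S" "apery_w S i mod m = i mod m"
  using apery_w_mem_mod[OF numerical_semigroup] m_pos multiplicity_eq by auto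

lemma r_mod_m_eq_1: "r mod m = 1"
proof (rule ccontr)
  let ?i = "r mod m"
  assume "?i \<noteq> 1"
  then have "1 < ?i" and "?i < m" using r_mod_m_ne_0 m_pos by auto
  then have "apery_w S 1 < apery_w S ?i" by (intro apery_w_strict_mono) auto
  also have "apery_w S ?i \<le> r"
    using apery_w_le generators_mem(2) multiplicity_eq by simp
  finally have "apery_w S 1 < r" .
  moreover have "r \<le> apery_w S 1"
    using r_le_if_mod_ne_0 apery_w_mem_mod_m \<open>?i < m\<close> \<open>1 < ?i\<close> by simp
  ultimately show False by simp
qed

lemma mult_r_mod_m: "(y * r) mod m = y mod m"
  using r_mod_m_eq_1 by (metis mod_mult_right_eq mult.right_neutral)

lemma M_less_mod_mult_r: "M < (M mod m) * r"
proof (rule ccontr)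
  let ?t = "M mod m"
  assume "\<not> M < ?t * r"
  then have le: "?t * r \<le> M" by simp
  have "?t * r mod m = M mod m" using mult_r_mod_m by simp
  then obtain k where k: "M - ?t * r = k * m"
    using le by (metis mod_eq_dvd_iff_nat dvd_def mult.commute)
  have "1 \<le> ?t" using M_mod_m_ne_0 by simp
  then have "?t * r = r + (?t - 1) * r" by (simp add: mult_eq_if)
  then have "M = r + ((?t - 1) * r + k * m)" using k le by simp
  moreover have "(?t - 1) * r + k * m \<in> S"
    using combination_mem[of k "?t - 1" 0] by (simp add: add.commute)
  moreover have "(?t - 1) * r + k * m \<noteq> 0"
    using calculation(1) r_less_M by linarith
  ultimately show False using M_not_sum generators_mem(2) m_less_r by auto
qed

lemma M_mod_m_ge_2: "2 \<le> M mod m"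
  using M_less_mod_mult_r M_mod_m_ne_0 r_less_M by (cases "M mod m = 1") auto

lemma mod_mult_r_le_if_less_M:
  assumes "s \<in> S" and "s < M"
  shows "(s mod m) * r \<le> s"
proof -
  obtain x y z where s: "s = x * m + y * r + z * M"
    using mem_imp_combination assms(1) by blast
  from assms(2) have "z = 0" unfolding s by (cases z) auto
  then have "s mod m = (y * r) mod m" unfolding s by simp
  also have "\<dots> = y mod m" by (rule mult_r_mod_m)
  finally have "(s mod m) * r \<le> y * r" by simp
  then show ?thesis using s by linarith
qed

lemma pred_mod_mult_r_less_M: "(M mod m - 1) * r < M"
proof -
  let ?t = "M mod m"
  have "?t < m" using m_pos by simp
  have "apery_w S (?t - 1) < apery_w S ?t"
    using M_mod_m_ge_2 \<open>?t < m\<close> by (intro apery_w_strict_mono) auto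
  also have "apery_w S ?t \<le> M"
    using apery_w_le generators_mem(3) multiplicity_eq by simp
  finally have w_less: "apery_w S (?t - 1) < M" .
  moreover have "(?t - 1) * r \<le> apery_w S (?t - 1)"
    using mod_mult_r_le_if_less_M[OF apery_w_mem_mod_m(1) w_less] apery_w_mem_mod_m(2) \<open>?t < m\<close>
    by simp
  ultimately show ?thesis by linarith
qed

end

theorem proposition3p1:
  fixes S :: "nat set"
  assumes "MANS S" and "embdim S = 3"
  shows "\<exists>m a b t :: nat. m \<ge> 3 \<and> a \<ge> 1 \<and> t \<in> {2..m-1} \<and>
           (t - 1) * (a * m + 1) < b * m + t \<and> b * m + t < t * (a * m + 1) \<and>
           (multiplicity S, ratio S, maxgen S) = (m, a * m + 1, b * m + t)"
proof -
  obtain m r M where "msg S = {m, r, M}" "m < r" "r < M"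
    using card_3_sorted assms(2) unfolding embdim_def by blast
  then interpret MANS_three_generated S m r M
    using assms(1) by unfold_locales (auto simp: MANS_def)
  define a b t where "a = r div m" and "b = M div m" and "t = M mod m"
  have r: "r = a * m + 1"
    using div_mult_mod_eq[of r m] r_mod_m_eq_1 unfolding a_def by simp
  have M: "M = b * m + t"
    using div_mult_mod_eq[of M m] unfolding b_def t_def by simp
  have "2 \<le> t" "t < m" using M_mod_m_ge_2 m_pos unfolding t_def by auto
  moreover have "1 \<le> a" using r m_less_r m_pos by (cases a) auto
  moreover have "(t - 1) * r < M" "M < t * r"
    using pred_mod_mult_r_less_M M_less_mod_mult_r unfolding t_def by simp_all
  ultimately show ?thesis
    using multiplicity_eq ratio_eq maxgen_eq unfolding r M
    by (intro exI[of _ m] exI[of _ a] exI[of _ b] exI[of _ t]) auto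
qed

end
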